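(* Let $N,q,L\in\mathbb{N}_{\ge1}$, $0<\varepsilon\le\frac1{2NL}$, and let $s\in S=\frac1{NL}\{0,\dots,L-1\}^n$ satisfy $H(\varepsilon)\cap G(s)=\emptyset$, where $G(s)=\{s+\frac1Nv:v\in\{0,\dots,qN-1\}^n\}$. Let $H_{\mathrm{bound}}=(-\frac1N,0]^n+H$. Then $$\frac{|G(s)\setminus H_{\mathrm{bound}}|}{|G(s)|}\ge 1-\frac1N\cdot\frac{nD(q+1+A+C)^n(A+2/N)^{n-1}}{(Cq)^n}.$$
   Context: An $n$-dimensional infrastructure consists of a full-rank lattice $\Lambda\subset\mathbb{R}^n$, a finite non-empty set $X$, an injective map $d:X\to\mathbb{R}^n/\Lambda$, and a set $\mathrm{fRep}\subseteq X\times\mathbb{R}^n$ with $X\times\{0\}\subseteq\mathrm{fRep}$ such that $\Phi:\mathrm{fRep}\to\mathbb{R}^n/\Lambda$, $(x,t)\mapsto d(x)+t$, is a bijection. Let $\pi:\mathbb{R}^n\to\mathbb{R}^n/\Lambda$ be the projection, $\hat X=\pi^{-1}(d(X))$, and for $\hat x\in\hat X$ let $\hat V_{\hat x}=\{\hat x+t:(d^{-1}(\pi(\hat x)),t)\in\mathrm{fRep}\}$; these sets partition $\mathbb{R}^n$. Standing assumptions: the infrastructure is cornered (for each $\hat x$, $\hat x\in\hat V_{\hat x}$ and $\{r:\hat x\le r\le t\}\subseteq\hat V_{\hat x}$ for all $t\in\hat V_{\hat x}$, componentwise order); (A1) there is $A>0$ with $\hat V_{\hat x}\subseteq\hat x+[0,A]^n$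 for all $\hat x$; (A2) there are $C,D>0$ such that $(r+[0,C]^n)\cap\hat X$ has at most $D$ elements for every $r\in\mathbb{R}^n$. $H=\bigcup_{\hat x\in\hat X}\partial\hat V_{\hat x}$ (topological boundaries) and $H(\varepsilon)=H+[-\varepsilon,\varepsilon]^n$. *)

theory Defs
  imports "HOL-Analysis.Analysis"
begin

definition full_rank_lattice :: "(real^'n) set \<Rightarrow> bool" where
  "full_rank_lattice \<Lambda> \<longleftrightarrow>
     (\<exists>B::real^'n^'n. invertible B \<and>
        \<Lambda> = {B *v (\<chi> i. real_of_int (k i)) | k :: 'n \<Rightarrow> int. True})"

text \<open>Points of R^n/Lambda are represented by representatives; equality in the quotient
  is congruence modulo Lambda.\<close>
definition infrastructure ::
  "(real^'n) set \<Rightarrow> 'x set \<Rightarrow> ('x \<Rightarrow> real^'n) \<Rightarrow> ('x \<times> (real^'n)) set \<Rightarrow> bool" where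
  "infrastructure \<Lambda> X d fRep \<longleftrightarrow>
     full_rank_lattice \<Lambda> \<and> finite X \<and> X \<noteq> {} \<and>
     (\<forall>x\<in>X. \<forall>y\<in>X. d x - d y \<in> \<Lambda> \<longrightarrow> x = y) \<and>
     fRep \<subseteq> X \<times> UNIV \<and> X \<times> {0} \<subseteq> fRep \<and>
     (\<forall>r. \<exists>p\<in>fRep. d (fst p) + snd p - r \<in> \<Lambda>) \<and>
     (\<forall>p\<in>fRep. \<forall>p'\<in>fRep. d (fst p) + snd p - (d (fst p') + snd p') \<in> \<Lambda> \<longrightarrow> p = p')"

definition Xhat :: "(real^'n) set \<Rightarrow> 'x set \<Rightarrow> ('x \<Rightarrow> real^'n) \<Rightarrow> (real^'n) set" where
  "Xhat \<Lambda> X d = {p. \<exists>x\<in>X. p - d x \<in> \<Lambda>}"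

definition xof :: "(real^'n) set \<Rightarrow> 'x set \<Rightarrow> ('x \<Rightarrow> real^'n) \<Rightarrow> real^'n \<Rightarrow> 'x" where
  "xof \<Lambda> X d p = (THE x. x \<in> X \<and> p - d x \<in> \<Lambda>)"

definition Vhat :: "(real^'n) set \<Rightarrow> 'x set \<Rightarrow> ('x \<Rightarrow> real^'n) \<Rightarrow> ('x \<times> (real^'n)) set
                    \<Rightarrow> real^'n \<Rightarrow> (real^'n) set" where
  "Vhat \<Lambda> X d fRep p = {p + t | t. (xof \<Lambda> X d p, t) \<in> fRep}"

definition cornered :: "(real^'n) set \<Rightarrow> 'x set \<Rightarrow> ('x \<Rightarrow> real^'n) \<Rightarrow> ('x \<times> (real^'n)) set \<Rightarrow> bool" where
  "cornered \<Lambda> X d fRep \<longleftrightarrow>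
     (\<forall>p\<in>Xhat \<Lambda> X d. p \<in> Vhat \<Lambda> X d fRep p \<and>
        (\<forall>t\<in>Vhat \<Lambda> X d fRep p. {r. (\<forall>i. p$i \<le> r$i \<and> r$i \<le> t$i)} \<subseteq> Vhat \<Lambda> X d fRep p))"

definition assumption_A1 :: "(real^'n) set \<Rightarrow> 'x set \<Rightarrow> ('x \<Rightarrow> real^'n) \<Rightarrow> ('x \<times> (real^'n)) set \<Rightarrow> real \<Rightarrow> bool" where
  "assumption_A1 \<Lambda> X d fRep A \<longleftrightarrow> A > 0 \<and>
     (\<forall>p\<in>Xhat \<Lambda> X d. Vhat \<Lambda> X d fRep p \<subseteq> {p + u | u. \<forall>i. 0 \<le> u$i \<and> u$i \<le> A})"

definition assumption_A2 :: "(real^'n) set \<Rightarrow> 'x set \<Rightarrow> ('x \<Rightarrow> real^'n) \<Rightarrow> real \<Rightarrow> real \<Rightarrow> bool" where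
  "assumption_A2 \<Lambda> X d C D \<longleftrightarrow> C > 0 \<and> D > 0 \<and>
     (\<forall>r::real^'n. let Q = {r + u | u. \<forall>i. 0 \<le> u$i \<and> u$i \<le> C} \<inter> Xhat \<Lambda> X d
                   in finite Q \<and> real (card Q) \<le> D)"

definition Hset :: "(real^'n) set \<Rightarrow> 'x set \<Rightarrow> ('x \<Rightarrow> real^'n) \<Rightarrow> ('x \<times> (real^'n)) set \<Rightarrow> (real^'n) set" where
  "Hset \<Lambda> X d fRep = (\<Union>p\<in>Xhat \<Lambda> X d. frontier (Vhat \<Lambda> X d fRep p))"

definition Heps :: "(real^'n) set \<Rightarrow> 'x set \<Rightarrow> ('x \<Rightarrow> real^'n) \<Rightarrow> ('x \<times> (real^'n)) set \<Rightarrow> real \<Rightarrow> (real^'n) set" where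
  "Heps \<Lambda> X d fRep \<epsilon> = {h + u | h u. h \<in> Hset \<Lambda> X d fRep \<and> (\<forall>i. -\<epsilon> \<le> u$i \<and> u$i \<le> \<epsilon>)}"

definition Hbound :: "(real^'n) set \<Rightarrow> 'x set \<Rightarrow> ('x \<Rightarrow> real^'n) \<Rightarrow> ('x \<times> (real^'n)) set \<Rightarrow> nat \<Rightarrow> (real^'n) set" where
  "Hbound \<Lambda> X d fRep N = {u + h | u h. h \<in> Hset \<Lambda> X d fRep \<and> (\<forall>i. - 1 / real N < u$i \<and> u$i \<le> 0)}"

definition Sgrid :: "nat \<Rightarrow> nat \<Rightarrow> (real^'n) set" where
  "Sgrid N L = {(\<chi> i. real (k i) / (real N * real L)) | k :: 'n \<Rightarrow> nat. \<forall>i. k i < L}"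

definition Ggrid :: "nat \<Rightarrow> nat \<Rightarrow> real^'n \<Rightarrow> (real^'n) set" where
  "Ggrid N q s = {s + (\<chi> i. real (v i) / real N) | v :: 'n \<Rightarrow> nat. \<forall>i. v i < q * N}"

end

theory Submission
  imports Defs
begin

text \<open>Every point \<open>g\<close> of \<open>G(s) \<inter> H_bound\<close> lies in a cell \<open>V_p\<close> with \<open>p \<le> g \<le> p + (A, \<dots>, A)\<close>.
  Inside one cell two such points never differ by a diagonal vector \<open>(t, \<dots>, t)\<close> with
  \<open>t \<ge> 1/N\<close>: by cornering the cell would then contain an open box around a point of \<open>H\<close>,
  but \<open>H\<close> misses the interiors of the cells. Sliding the points down the diagonal onto the
  lower faces of \<open>p + [0, A]\<^sup>n\<close> is therefore injective, so a cell holds at most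
  \<open>n (AN + 1)\<^sup>n\<^sup>-\<^sup>1\<close> of them. The corners of the cells meeting \<open>G(s)\<close> lie in a box of side
  \<open>q + A\<close>, which by (A2) contains at most \<open>((q + A)/C + 1)\<^sup>n D\<close> points of \<open>X\<close>; dividing
  by \<open>|G(s)| = (qN)\<^sup>n\<close> gives the bound.\<close>

lemma full_rank_lattice_diff:
  fixes \<Lambda> :: "(real^'n) set"
  assumes "full_rank_lattice \<Lambda>" "a \<in> \<Lambda>" "b \<in> \<Lambda>"
  shows "a - b \<in> \<Lambda>"
proof -
  obtain B :: "real^'n^'n" where \<Lambda>: "\<Lambda> = {B *v (\<chi> i. real_of_int (k i)) | k :: 'n \<Rightarrow> int. True}"
    using assms(1) unfolding full_rank_lattice_def by blast
  obtain k l :: "'n \<Rightarrow> int"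
    where a: "a = B *v (\<chi> i. real_of_int (k i))" and b: "b = B *v (\<chi> i. real_of_int (l i))"
    using assms(2,3) \<Lambda> by blast
  have "(\<chi> i. real_of_int (k i - l i)) = (\<chi> i. real_of_int (k i)) - (\<chi> i. real_of_int (l i))"
    by (simp add: vec_eq_iff)
  then have "a - b = B *v (\<chi> i. real_of_int (k i - l i))"
    unfolding a b by (simp add: matrix_vector_mult_diff_distrib)
  then show ?thesis unfolding \<Lambda> by (intro CollectI exI[of _ "\<lambda>i. k i - l i"]) simp
qed

lemma full_rank_lattice_uminus:
  fixes \<Lambda> :: "(real^'n) set"
  assumes "full_rank_lattice \<Lambda>" "a \<in> \<Lambda>"
  shows "- a \<in> \<Lambda>"
  using full_rank_lattice_diff[OF assms(1) full_rank_lattice_diff[OF assms assms(2)] assms(2)]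
  by simp

lemma infrastructureD:
  assumes "infrastructure \<Lambda> X d fRep"
  shows "full_rank_lattice \<Lambda>"
    and "\<And>x y. x \<in> X \<Longrightarrow> y \<in> X \<Longrightarrow> d x - d y \<in> \<Lambda> \<Longrightarrow> x = y"
    and "\<And>x t. (x, t) \<in> fRep \<Longrightarrow> x \<in> X"
    and "\<And>r. \<exists>(x, t) \<in> fRep. d x + t - r \<in> \<Lambda>"
    and "\<And>x t x' t'. (x, t) \<in> fRep \<Longrightarrow> (x', t') \<in> fRep \<Longrightarrow> d x + t - (d x' + t') \<in> \<Lambda>
           \<Longrightarrow> x = x' \<and> t = t'"
proof -
  note infra = assms[unfolded infrastructure_def]
  show "full_rank_lattice \<Lambda>"
    and "\<And>x y. x \<in> X \<Longrightarrow> y \<in> X \<Longrightarrow> d x - d y \<in> \<Lambda> \<Longrightarrow> x = y"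
    and "\<And>x t. (x, t) \<in> fRep \<Longrightarrow> x \<in> X"
    using infra by blast+
  show "\<exists>(x, t) \<in> fRep. d x + t - r \<in> \<Lambda>" for r
    using infra by (simp add: split_def)
  have "\<forall>p\<in>fRep. \<forall>p'\<in>fRep. d (fst p) + snd p - (d (fst p') + snd p') \<in> \<Lambda> \<longrightarrow> p = p'"
    using infra by blast
  then show "\<And>x t x' t'. (x, t) \<in> fRep \<Longrightarrow> (x', t') \<in> fRep \<Longrightarrow> d x + t - (d x' + t') \<in> \<Lambda>
      \<Longrightarrow> x = x' \<and> t = t'"
    by fastforce
qed

lemma xof_eq:
  assumes inf: "infrastructure \<Lambda> X d fRep" and "x \<in> X" "p - d x \<in> \<Lambda>"
  shows "xof \<Lambda> X d p = x"
  unfolding xof_def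
proof (rule the_equality)
  fix y assume y: "y \<in> X \<and> p - d y \<in> \<Lambda>"
  have "d y - d x = (p - d x) - (p - d y)" by simp
  then have "d y - d x \<in> \<Lambda>"
    using full_rank_lattice_diff[OF infrastructureD(1)[OF inf]] assms y by metis
  then show "y = x" using infrastructureD(2)[OF inf] y assms by auto
qed (use assms in auto)

lemma xof_in_Xhat:
  assumes inf: "infrastructure \<Lambda> X d fRep" and "p \<in> Xhat \<Lambda> X d"
  shows "xof \<Lambda> X d p \<in> X" "p - d (xof \<Lambda> X d p) \<in> \<Lambda>"
  using assms(2) xof_eq[OF inf] unfolding Xhat_def by auto

lemma Vhat_cover:
  assumes inf: "infrastructure \<Lambda> X d fRep"
  shows "\<exists>p\<in>Xhat \<Lambda> X d. r \<in> Vhat \<Lambda> X d fRep p"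
proof -
  obtain x t where xt: "(x, t) \<in> fRep" "d x + t - r \<in> \<Lambda>"
    using infrastructureD(4)[OF inf, of r] by blast
  have x: "x \<in> X" using infrastructureD(3)[OF inf xt(1)] .
  have eq: "(r - t) - d x = - (d x + t - r)" by simp
  have "(r - t) - d x \<in> \<Lambda>"
    unfolding eq using full_rank_lattice_uminus[OF infrastructureD(1)[OF inf] xt(2)] .
  then have "r - t \<in> Xhat \<Lambda> X d" and "xof \<Lambda> X d (r - t) = x"
    using x xof_eq[OF inf x] unfolding Xhat_def by auto
  moreover from this have "r \<in> Vhat \<Lambda> X d fRep (r - t)"
    unfolding Vhat_def using xt(1) by force
  ultimately show ?thesis by blast
qed

lemma Vhat_unique:
  assumes inf: "infrastructure \<Lambda> X d fRep"
    and p: "p \<in> Xhat \<Lambda> X d" and p': "p' \<in> Xhat \<Lambda> X d"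
    and r: "r \<in> Vhat \<Lambda> X d fRep p" "r \<in> Vhat \<Lambda> X d fRep p'"
  shows "p = p'"
proof -
  define x x' where "x = xof \<Lambda> X d p" and "x' = xof \<Lambda> X d p'"
  obtain t where t: "r = p + t" "(x, t) \<in> fRep"
    using r(1) unfolding Vhat_def x_def by auto
  obtain t' where t': "r = p' + t'" "(x', t') \<in> fRep"
    using r(2) unfolding Vhat_def x'_def by auto
  have "d x + t - (d x' + t') = (p' - d x') - (p - d x)"
    using t t' by (simp add: algebra_simps)
  then have "d x + t - (d x' + t') \<in> \<Lambda>"
    using full_rank_lattice_diff[OF infrastructureD(1)[OF inf]] xof_in_Xhat(2)[OF inf] p p'
    unfolding x_def x'_def by metis
  then have "t = t'" using infrastructureD(5)[OF inf t(2) t'(2)] by blast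
  then show ?thesis using t t' by simp
qed

lemma corneredD:
  assumes "cornered \<Lambda> X d fRep" "p \<in> Xhat \<Lambda> X d" "t \<in> Vhat \<Lambda> X d fRep p"
    and "\<And>i. p$i \<le> r$i \<and> r$i \<le> t$i"
  shows "r \<in> Vhat \<Lambda> X d fRep p"
  using assms unfolding cornered_def by blast

lemma assumption_A1D:
  assumes "assumption_A1 \<Lambda> X d fRep A" "p \<in> Xhat \<Lambda> X d" "g \<in> Vhat \<Lambda> X d fRep p"
  shows "p$i \<le> g$i" "g$i \<le> p$i + A"
proof -
  obtain u where "g = p + u" "\<forall>i. 0 \<le> u$i \<and> u$i \<le> A"
    using assms unfolding assumption_A1_def by blast
  then show "p$i \<le> g$i" "g$i \<le> p$i + A" by auto
qed

lemma Hset_notin_interior_Vhat: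
  assumes inf: "infrastructure \<Lambda> X d fRep"
    and h: "h \<in> Hset \<Lambda> X d fRep" and p: "p \<in> Xhat \<Lambda> X d"
  shows "h \<notin> interior (Vhat \<Lambda> X d fRep p)"
proof
  assume h_int: "h \<in> interior (Vhat \<Lambda> X d fRep p)"
  obtain p' where p': "p' \<in> Xhat \<Lambda> X d" "h \<in> frontier (Vhat \<Lambda> X d fRep p')"
    using h unfolding Hset_def by blast
  then have "interior (Vhat \<Lambda> X d fRep p) \<inter> closure (Vhat \<Lambda> X d fRep p') \<noteq> {}"
    using h_int unfolding frontier_def by blast
  then obtain z where "z \<in> interior (Vhat \<Lambda> X d fRep p)" "z \<in> Vhat \<Lambda> X d fRep p'"
    using open_Int_closure_eq_empty[OF open_interior] by blast
  then have "p' = p" using Vhat_unique[OF inf p'(1) p] interior_subset by blast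
  then show False using p'(2) h_int unfolding frontier_def by blast
qed

lemma cube_subset_Vhat_if_notin_Heps:
  fixes g :: "real^'n"
  assumes p: "p \<in> Xhat \<Lambda> X d" and g: "g \<in> Vhat \<Lambda> X d fRep p"
    and gH: "g \<notin> Heps \<Lambda> X d fRep \<epsilon>" and eps: "0 < \<epsilon>"
  shows "cbox (g - (\<chi> i. \<epsilon>)) (g + (\<chi> i. \<epsilon>)) \<subseteq> Vhat \<Lambda> X d fRep p"
proof (rule ccontr)
  let ?Q = "cbox (g - (\<chi> i. \<epsilon>)) (g + (\<chi> i. \<epsilon>))" and ?V = "Vhat \<Lambda> X d fRep p"
  assume "\<not> ?Q \<subseteq> ?V"
  moreover have "g \<in> ?Q" using eps unfolding mem_box_cart by auto
  moreover have "connected ?Q" by (simp add: convex_connected)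
  ultimately obtain y where y: "y \<in> ?Q" "y \<in> frontier ?V"
    using connected_Int_frontier[of ?Q ?V] g by blast
  have "y \<in> Hset \<Lambda> X d fRep" unfolding Hset_def using y(2) p by blast
  moreover have "\<forall>i. - \<epsilon> \<le> (g - y)$i \<and> (g - y)$i \<le> \<epsilon>"
  proof
    fix i
    show "- \<epsilon> \<le> (g - y)$i \<and> (g - y)$i \<le> \<epsilon>"
      using y(1)[unfolded mem_box_cart, rule_format, of i] by simp
  qed
  ultimately have "g \<in> Heps \<Lambda> X d fRep \<epsilon>"
    unfolding Heps_def by (intro CollectI exI[of _ y] exI[of _ "g - y"]) simp
  then show False using gH by blast
qed

text \<open>The open box \<open>(g - \<epsilon>, g + 1/N)\<close> contains a point of \<open>H\<close> because \<open>g \<in> H_bound\<close>. It lies in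
  the cell of \<open>g\<close> if \<open>g + (t, \<dots>, t)\<close> does: \<open>g - \<epsilon>\<close> is in that cell since \<open>g\<close> is \<open>\<epsilon>\<close>-far
  from \<open>H\<close>, and the cell is cornered.\<close>

lemma diagonal_step_leaves_Vhat:
  fixes g :: "real^'n"
  assumes inf: "infrastructure \<Lambda> X d fRep" and corn: "cornered \<Lambda> X d fRep"
    and A1: "assumption_A1 \<Lambda> X d fRep A"
    and p: "p \<in> Xhat \<Lambda> X d" and g: "g \<in> Vhat \<Lambda> X d fRep p"
    and gH: "g \<notin> Heps \<Lambda> X d fRep \<epsilon>" and eps: "0 < \<epsilon>"
    and gB: "g \<in> Hbound \<Lambda> X d fRep N"
    and t: "1 / real N \<le> t"
  shows "g + (\<chi> i. t) \<notin> Vhat \<Lambda> X d fRep p"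
proof
  let ?V = "Vhat \<Lambda> X d fRep p"
  assume gt: "g + (\<chi> i. t) \<in> ?V"
  have "g - (\<chi> i. \<epsilon>) \<in> cbox (g - (\<chi> i. \<epsilon>)) (g + (\<chi> i. \<epsilon>))"
    using eps by (simp add: mem_box_cart)
  then have "g - (\<chi> i. \<epsilon>) \<in> ?V"
    using cube_subset_Vhat_if_notin_Heps[OF p g gH eps] by blast
  then have p_le: "p$i \<le> g$i - \<epsilon>" for i
    using assumption_A1D(1)[OF A1 p, of "g - (\<chi> i. \<epsilon>)" i] by simp
  define W where "W = box (g - (\<chi> i. \<epsilon>)) (g + (\<chi> i. 1 / real N))"
  have W_sub: "W \<subseteq> ?V"
  proof
    fix r assume r: "r \<in> W"
    have "p$i \<le> r$i \<and> r$i \<le> (g + (\<chi> i. t))$i" for i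
    proof -
      have "g$i - \<epsilon> < r$i" "r$i < g$i + 1 / real N"
        using r unfolding W_def mem_box_cart by auto
      then show ?thesis using p_le[of i] t by simp
    qed
    then show "r \<in> ?V" by (rule corneredD[OF corn p gt])
  qed
  have "open W" unfolding W_def by (rule open_box)
  with W_sub have W_int: "W \<subseteq> interior ?V" by (rule interior_maximal)
  obtain u h where uh: "g = u + h" "h \<in> Hset \<Lambda> X d fRep" "\<forall>i. - 1 / real N < u$i \<and> u$i \<le> 0"
    using gB unfolding Hbound_def by blast
  have "h \<in> W"
    unfolding W_def mem_box_cart
  proof
    fix i
    show "(g - (\<chi> i. \<epsilon>))$i < h$i \<and> h$i < (g + (\<chi> i. 1 / real N))$i"
      using uh(1) uh(3)[rule_format, of i] eps by simp
  qed
  then show False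
    using Hset_notin_interior_Vhat[OF inf uh(2) p] W_int by blast
qed

lemma card_int_interval_le:
  fixes a l :: real
  assumes "0 \<le> l"
  shows "finite {k::int. a \<le> of_int k \<and> of_int k \<le> a + l}"
    and "real (card {k::int. a \<le> of_int k \<and> of_int k \<le> a + l}) \<le> l + 1"
proof -
  have eq: "{k::int. a \<le> of_int k \<and> of_int k \<le> a + l} = {\<lceil>a\<rceil>..\<lfloor>a + l\<rfloor>}"
    by (auto simp: ceiling_le_iff le_floor_iff)
  show "finite {k::int. a \<le> of_int k \<and> of_int k \<le> a + l}" unfolding eq by simp
  have "real (card {\<lceil>a\<rceil>..\<lfloor>a + l\<rfloor>}) \<le> l + 1"
  proof (cases "\<lceil>a\<rceil> \<le> \<lfloor>a + l\<rfloor>")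
    case True
    then have "real (card {\<lceil>a\<rceil>..\<lfloor>a + l\<rfloor>}) = of_int \<lfloor>a + l\<rfloor> - of_int \<lceil>a\<rceil> + 1"
      by simp
    moreover have "real_of_int \<lfloor>a + l\<rfloor> \<le> a + l" "a \<le> real_of_int \<lceil>a\<rceil>" by simp_all
    ultimately show ?thesis by linarith
  qed (use assms in simp)
  then show "real (card {k::int. a \<le> of_int k \<and> of_int k \<le> a + l}) \<le> l + 1"
    unfolding eq .
qed

lemma int_unit_interval_eq:
  fixes a :: real
  shows "{k::int. a \<le> of_int k \<and> of_int k < a + 1} = {\<lceil>a\<rceil>}"
proof -
  have "of_int \<lceil>a\<rceil> < a + 1" by linarith
  then show ?thesis by (auto simp: ceiling_le_iff le_ceiling_iff) linarith
qed

lemma card_int_box_near_lower_face: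
  fixes a :: "'n::finite \<Rightarrow> real" and l :: real
  assumes "0 \<le> l"
  defines "K \<equiv> {k :: 'n \<Rightarrow> int. (\<forall>j. a j \<le> k j \<and> k j \<le> a j + l) \<and> (\<exists>i. k i < a i + 1)}"
  shows "finite K" "real (card K) \<le> real CARD('n) * (l + 1) ^ (CARD('n) - 1)"
proof -
  define I where "I j = {k::int. a j \<le> of_int k \<and> of_int k \<le> a j + l}" for j
  define B where "B i j = (if j = i then {\<lceil>a j\<rceil>} else I j)" for i j
  have fin_B: "finite (B i j)" for i j
    unfolding B_def I_def using card_int_interval_le(1)[OF assms(1)] by simp
  have card_B: "real (card (B i j)) \<le> (if j = i then 1 else l + 1)" for i j
    unfolding B_def I_def using card_int_interval_le(2)[OF assms(1)] by simp
  have "K \<subseteq> (\<Union>i. PiE UNIV (B i))"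
  proof
    fix k assume "k \<in> K"
    then obtain i where k: "\<forall>j. a j \<le> k j \<and> k j \<le> a j + l" "k i < a i + 1"
      unfolding K_def by blast
    have "k i = \<lceil>a i\<rceil>" using int_unit_interval_eq[of "a i"] k by blast
    then have "k \<in> PiE UNIV (B i)" using k(1) by (auto simp: B_def I_def PiE_UNIV_domain)
    then show "k \<in> (\<Union>i. PiE UNIV (B i))" by blast
  qed
  moreover have fin: "finite (\<Union>i. PiE UNIV (B i))" by (simp add: finite_PiE fin_B)
  ultimately show "finite K" by (rule finite_subset)
  have card_PiE_B: "real (card (PiE UNIV (B i))) \<le> (l + 1) ^ (CARD('n) - 1)" for i
  proof -
    have "real (card (PiE UNIV (B i))) = (\<Prod>j\<in>UNIV. real (card (B i j)))"
      by (simp add: card_PiE)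
    also have "\<dots> \<le> (\<Prod>j\<in>UNIV. if j = i then 1 else l + 1)"
      using card_B assms by (intro prod_mono) simp
    also have "\<dots> = (\<Prod>j\<in>UNIV - {i}. l + 1)"
      by (simp add: prod.remove[of UNIV i])
    also have "\<dots> = (l + 1) ^ (CARD('n) - 1)" by (simp add: card_Diff_singleton)
    finally show ?thesis .
  qed
  have "card K \<le> card (\<Union>i. PiE UNIV (B i))" by (rule card_mono) fact+
  also have "\<dots> \<le> (\<Sum>i\<in>UNIV. card (PiE UNIV (B i)))" by (rule card_UN_le) simp
  finally have "real (card K) \<le> (\<Sum>i\<in>UNIV. real (card (PiE UNIV (B i))))"
    by (metis of_nat_le_iff of_nat_sum)
  also have "\<dots> \<le> (\<Sum>i\<in>(UNIV::'n set). (l + 1) ^ (CARD('n) - 1))"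
    by (rule sum_mono) (rule card_PiE_B)
  finally show "real (card K) \<le> real CARD('n) * (l + 1) ^ (CARD('n) - 1)" by simp
qed

lemma card_diagonal_free_grid_le:
  fixes F :: "(real^'n) set" and s p :: "real^'n" and N A :: real
  assumes N: "0 < N" and A: "0 \<le> A"
    and grid: "\<And>g. g \<in> F \<Longrightarrow> \<exists>k. g = s + (\<chi> i. of_int (k i) / N)"
    and box: "\<And>g i. g \<in> F \<Longrightarrow> p$i \<le> g$i \<and> g$i \<le> p$i + A"
    and diagonal_free: "\<And>g t. g \<in> F \<Longrightarrow> 1 / N \<le> t \<Longrightarrow> g + (\<chi> i. t) \<notin> F"
  shows "real (card F) \<le> real CARD('n) * (A * N + 1) ^ (CARD('n) - 1)"
proof -
  obtain k where k: "\<And>g. g \<in> F \<Longrightarrow> g = s + (\<chi> i. of_int (k g i) / N)"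
    using grid by metis
  define a where "a j = N * (p$j - s$j)" for j
  have k_coord: "of_int (k g j) - a j = N * (g$j - p$j)" if "g \<in> F" for g j
  proof -
    have "g$j = s$j + of_int (k g j) / N" using arg_cong[OF k[OF that], of "\<lambda>v. v$j"] by simp
    then show ?thesis using N by (simp add: a_def field_simps)
  qed
  define c where "c g = Min (range (\<lambda>i. \<lfloor>N * (g$i - p$i)\<rfloor>))" for g
  have c_le: "c g \<le> \<lfloor>N * (g$i - p$i)\<rfloor>" for g i
    unfolding c_def by (rule Min_le) auto
  have c_attained: "\<exists>i. c g = \<lfloor>N * (g$i - p$i)\<rfloor>" for g
  proof -
    have "c g \<in> range (\<lambda>i. \<lfloor>N * (g$i - p$i)\<rfloor>)" unfolding c_def by (rule Min_in) auto
    then show ?thesis by auto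
  qed
  have c_nonneg: "0 \<le> c g" if "g \<in> F" for g
    using c_attained[of g] box[OF that] N by fastforce
  define h where "h g = (\<lambda>j. k g j - c g)" for g
  define K where "K = {k :: 'n \<Rightarrow> int. (\<forall>j. a j \<le> k j \<and> k j \<le> a j + A * N) \<and> (\<exists>i. k i < a i + 1)}"
  have "h ` F \<subseteq> K"
  proof
    fix y assume "y \<in> h ` F"
    then obtain g where g: "g \<in> F" "y = h g" by blast
    have "a j \<le> of_int (y j) \<and> of_int (y j) \<le> a j + A * N" for j
    proof -
      have "of_int (c g) \<le> N * (g$j - p$j)" using c_le[of g j] by linarith
      moreover have "N * (g$j - p$j) \<le> A * N" using box[OF g(1), of j] N by simp
      ultimately show ?thesis using k_coord[OF g(1), of j] c_nonneg[OF g(1)] g(2)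
        by (simp add: h_def)
    qed
    moreover obtain i where "c g = \<lfloor>N * (g$i - p$i)\<rfloor>" using c_attained by blast
    then have "of_int (y i) < a i + 1" using k_coord[OF g(1), of i] g(2)
      by (simp add: h_def) linarith
    ultimately show "y \<in> K" unfolding K_def by blast
  qed
  moreover have "inj_on h F"
  proof (rule inj_onI)
    fix g1 g2 assume g: "g1 \<in> F" "g2 \<in> F" and h_eq: "h g1 = h g2"
    have shift: "g' = g + (\<chi> i. of_int (c g' - c g) / N)"
      if "g \<in> F" "g' \<in> F" "h g = h g'" for g g'
    proof -
      have "k g' j = k g j + (c g' - c g)" for j using fun_cong[OF that(3), of j] by (simp add: h_def)
      then show ?thesis using k[OF that(1)] k[OF that(2)]
        by (simp add: vec_eq_iff add_divide_distrib)
    qed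
    have no_shift: "\<not> c g < c g'" if "g \<in> F" "g' \<in> F" "h g = h g'" for g g'
    proof
      assume "c g < c g'"
      then have "1 / N \<le> of_int (c g' - c g) / N" using N by (simp add: divide_right_mono)
      then show False using diagonal_free[OF that(1)] shift[OF that] that(2) by metis
    qed
    have "c g1 = c g2" using no_shift[OF g h_eq] no_shift[OF g(2,1) h_eq[symmetric]] by simp
    then show "g1 = g2" using shift[OF g h_eq] by (simp add: vec_eq_iff)
  qed
  ultimately have "card F \<le> card K"
    using card_int_box_near_lower_face(1)[of "A * N" a] A N
    by (intro card_inj_on_le[of h]) (auto simp: K_def)
  then show ?thesis
    using card_int_box_near_lower_face(2)[of "A * N" a] A N unfolding K_def by simp
qed

lemma card_Xhat_Int_box_le:
  fixes r :: "real^'n"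
  assumes A2: "assumption_A2 \<Lambda> X d C D" and l: "0 \<le> l"
  defines "P \<equiv> {x \<in> Xhat \<Lambda> X d. \<forall>i. r$i \<le> x$i \<and> x$i \<le> r$i + l}"
  shows "finite P" "real (card P) \<le> (l / C + 1) ^ CARD('n) * D"
proof -
  have C: "0 < C" and D: "0 < D" using A2 unfolding assumption_A2_def by simp_all
  define J where "J = Suc (nat \<lfloor>l / C\<rfloor>)"
  define Q where "Q j = {r + (\<chi> i. C * real (j i)) + u | u. \<forall>i. 0 \<le> u$i \<and> u$i \<le> C} \<inter> Xhat \<Lambda> X d"
    for j :: "'n \<Rightarrow> nat"
  have Q: "finite (Q j)" "real (card (Q j)) \<le> D" for j
    using A2 unfolding assumption_A2_def Let_def Q_def by blast+
  define I where "I = PiE (UNIV::'n set) (\<lambda>_. {..<J})"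
  have "P \<subseteq> (\<Union>j\<in>I. Q j)"
  proof
    fix x assume "x \<in> P"
    then have x: "x \<in> Xhat \<Lambda> X d" "\<And>i. r$i \<le> x$i \<and> x$i \<le> r$i + l"
      unfolding P_def by auto
    define y where "y i = (x$i - r$i) / C" for i
    have y: "0 \<le> y i" "y i \<le> l / C" for i
    proof -
      have "0 \<le> x$i - r$i" "x$i - r$i \<le> l" using x(2)[of i] by linarith+
      then show "0 \<le> y i" "y i \<le> l / C" using C unfolding y_def by (simp_all add: divide_right_mono)
    qed
    define j where "j i = nat \<lfloor>y i\<rfloor>" for i
    have "j i < J" for i
      using y[of i] unfolding j_def J_def by (simp add: floor_mono nat_mono le_imp_less_Suc)
    then have "j \<in> I" unfolding I_def by (simp add: PiE_UNIV_domain)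
    moreover have "0 \<le> x$i - r$i - C * real (j i) \<and> x$i - r$i - C * real (j i) \<le> C" for i
    proof -
      have "real (j i) = of_int \<lfloor>y i\<rfloor>" using y(1)[of i] unfolding j_def by simp
      then have "real (j i) \<le> y i" "y i < real (j i) + 1" by linarith+
      then show ?thesis using C unfolding y_def by (simp add: field_simps)
    qed
    then have "x \<in> Q j"
      unfolding Q_def using x(1)
      by (intro IntI CollectI exI[of _ "x - r - (\<chi> i. C * real (j i))"]) auto
    ultimately show "x \<in> (\<Union>j\<in>I. Q j)" by blast
  qed
  moreover have fin_I: "finite I" unfolding I_def by (simp add: finite_PiE)
  then have fin_U: "finite (\<Union>j\<in>I. Q j)" using Q(1) by blast
  ultimately show "finite P" by (rule finite_subset)
  have "card P \<le> card (\<Union>j\<in>I. Q j)" by (rule card_mono) fact+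
  also have "\<dots> \<le> (\<Sum>j\<in>I. card (Q j))" by (rule card_UN_le[OF fin_I])
  finally have "real (card P) \<le> (\<Sum>j\<in>I. real (card (Q j)))" by (metis of_nat_le_iff of_nat_sum)
  also have "\<dots> \<le> (\<Sum>j\<in>I. D)" by (rule sum_mono) (rule Q(2))
  also have "\<dots> = real J ^ CARD('n) * D" by (simp add: I_def card_PiE)
  also have "\<dots> \<le> (l / C + 1) ^ CARD('n) * D"
  proof -
    have "real J \<le> l / C + 1" unfolding J_def using l C by simp
    then show ?thesis using D by (intro mult_right_mono power_mono) simp_all
  qed
  finally show "real (card P) \<le> (l / C + 1) ^ CARD('n) * D" .
qed

lemma Ggrid_memD:
  fixes g s :: "real^'n"
  assumes "g \<in> Ggrid N q s" "N \<ge> 1"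
  shows "\<exists>k. g = s + (\<chi> i. of_int (k i) / real N)"
    and "s$i \<le> g$i" "g$i \<le> s$i + real q"
proof -
  obtain v :: "'n \<Rightarrow> nat" where v: "g = s + (\<chi> i. real (v i) / real N)" "\<forall>i. v i < q * N"
    using assms(1) unfolding Ggrid_def by blast
  show "\<exists>k. g = s + (\<chi> i. of_int (k i) / real N)"
    using v(1) by (intro exI[of _ "\<lambda>i. int (v i)"]) simp
  have "real (v i) \<le> real q * real N" using v(2) by (metis less_imp_le of_nat_le_iff of_nat_mult)
  then have "real (v i) / real N \<le> real q" using assms(2) by (simp add: divide_le_eq)
  then show "s$i \<le> g$i" "g$i \<le> s$i + real q" using v(1) by simp_all
qed

lemma card_Ggrid:
  fixes s :: "real^'n"
  assumes "N \<ge> 1"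
  shows "finite (Ggrid N q s)" "card (Ggrid N q s) = (q * N) ^ CARD('n)"
proof -
  define V where "V = PiE (UNIV::'n set) (\<lambda>_. {..<q * N})"
  have G: "Ggrid N q s = (\<lambda>v. s + (\<chi> i. real (v i) / real N)) ` V"
    unfolding Ggrid_def V_def PiE_UNIV_domain by auto
  have "inj_on (\<lambda>v. s + (\<chi> i. real (v i) / real N)) V"
    using assms by (intro inj_onI) (auto simp: vec_eq_iff fun_eq_iff)
  then show "finite (Ggrid N q s)" "card (Ggrid N q s) = (q * N) ^ CARD('n)"
    unfolding G V_def by (simp_all add: finite_PiE card_image card_PiE)
qed

lemma card_Ggrid_Hbound_in_Vhat_le:
  fixes s :: "real^'n"
  assumes inf: "infrastructure \<Lambda> X d fRep" and corn: "cornered \<Lambda> X d fRep"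
    and A1: "assumption_A1 \<Lambda> X d fRep A"
    and N: "N \<ge> 1" and eps: "0 < \<epsilon>"
    and disj: "Heps \<Lambda> X d fRep \<epsilon> \<inter> Ggrid N q s = {}"
    and p: "p \<in> Xhat \<Lambda> X d"
  shows "real (card {g \<in> Ggrid N q s \<inter> Hbound \<Lambda> X d fRep N. g \<in> Vhat \<Lambda> X d fRep p})
           \<le> real CARD('n) * (A * real N + 1) ^ (CARD('n) - 1)"
proof (rule card_diagonal_free_grid_le)
  let ?F = "{g \<in> Ggrid N q s \<inter> Hbound \<Lambda> X d fRep N. g \<in> Vhat \<Lambda> X d fRep p}"
  show "0 < real N" "0 \<le> A" using N A1 unfolding assumption_A1_def by simp_all
  show "\<exists>k. g = s + (\<chi> i. of_int (k i) / real N)" if "g \<in> ?F" for g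
    using Ggrid_memD(1)[OF _ N] that by blast
  show "p$i \<le> g$i \<and> g$i \<le> p$i + A" if "g \<in> ?F" for g i
    using assumption_A1D[OF A1 p] that by blast
  show "g + (\<chi> i. t) \<notin> ?F" if "g \<in> ?F" "1 / real N \<le> t" for g t
    using diagonal_step_leaves_Vhat[OF inf corn A1 p _ _ eps _ that(2)] that(1) disj by blast
qed

lemma card_Ggrid_Int_Hbound_le:
  fixes s :: "real^'n"
  assumes inf: "infrastructure \<Lambda> X d fRep" and corn: "cornered \<Lambda> X d fRep"
    and A1: "assumption_A1 \<Lambda> X d fRep A" and A2: "assumption_A2 \<Lambda> X d C D"
    and N: "N \<ge> 1" and eps: "0 < \<epsilon>"
    and disj: "Heps \<Lambda> X d fRep \<epsilon> \<inter> Ggrid N q s = {}"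
  shows "real (card (Ggrid N q s \<inter> Hbound \<Lambda> X d fRep N))
           \<le> ((real q + A) / C + 1) ^ CARD('n) * D * (real CARD('n) * (A * real N + 1) ^ (CARD('n) - 1))"
proof -
  let ?B = "Ggrid N q s \<inter> Hbound \<Lambda> X d fRep N" and ?V = "Vhat \<Lambda> X d fRep"
  have A: "0 < A" using A1 unfolding assumption_A1_def by simp
  define P where "P = {x \<in> Xhat \<Lambda> X d. \<forall>i. (s - (\<chi> i. A))$i \<le> x$i \<and> x$i \<le> (s - (\<chi> i. A))$i + (real q + A)}"
  have P: "finite P" "real (card P) \<le> ((real q + A) / C + 1) ^ CARD('n) * D"
    using card_Xhat_Int_box_le[OF A2, of "real q + A" "s - (\<chi> i. A)"] A unfolding P_def by simp_all
  have B_sub: "?B \<subseteq> (\<Union>p\<in>P. {g \<in> ?B. g \<in> ?V p})"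
  proof
    fix g assume g: "g \<in> ?B"
    obtain p where p: "p \<in> Xhat \<Lambda> X d" "g \<in> ?V p" using Vhat_cover[OF inf] by blast
    have "(s - (\<chi> i. A))$i \<le> p$i \<and> p$i \<le> (s - (\<chi> i. A))$i + (real q + A)" for i
      using assumption_A1D[OF A1 p, of i] Ggrid_memD(2,3)[of g N q s i] g N by simp
    then have "p \<in> P" unfolding P_def using p(1) by blast
    then show "g \<in> (\<Union>p\<in>P. {g \<in> ?B. g \<in> ?V p})" using g p(2) by blast
  qed
  have fin_B: "finite ?B" using card_Ggrid(1)[OF N, of q s] by simp
  have "card ?B \<le> card (\<Union>p\<in>P. {g \<in> ?B. g \<in> ?V p})"
    by (intro card_mono[OF _ B_sub] finite_UN_I P(1)) (rule finite_subset[OF _ fin_B], blast)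
  also have "\<dots> \<le> (\<Sum>p\<in>P. card {g \<in> ?B. g \<in> ?V p})"
    by (rule card_UN_le[OF P(1)])
  finally have "real (card ?B) \<le> (\<Sum>p\<in>P. real (card {g \<in> ?B. g \<in> ?V p}))"
    by (simp only: of_nat_sum[symmetric] of_nat_le_iff)
  also have "\<dots> \<le> (\<Sum>p\<in>P. real CARD('n) * (A * real N + 1) ^ (CARD('n) - 1))"
    using card_Ggrid_Hbound_in_Vhat_le[OF inf corn A1 N eps disj] unfolding P_def
    by (intro sum_mono) blast
  also have "\<dots> = real (card P) * (real CARD('n) * (A * real N + 1) ^ (CARD('n) - 1))" by simp
  also have "\<dots> \<le> ((real q + A) / C + 1) ^ CARD('n) * D * (real CARD('n) * (A * real N + 1) ^ (CARD('n) - 1))"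
    using P(2) A by (intro mult_right_mono) simp_all
  finally show ?thesis .
qed

lemma card_Diff_ratio_ge:
  assumes "finite G" "G \<noteq> {}" "real (card (G \<inter> B)) \<le> Z * real (card G)"
  shows "1 - Z \<le> real (card (G - B)) / real (card G)"
proof -
  have G: "0 < real (card G)" using assms(1,2) by (simp add: card_gt_0_iff)
  have "card (G \<inter> B) \<le> card G" using assms(1) by (simp add: card_mono)
  then have "real (card (G - B)) = real (card G) - real (card (G \<inter> B))"
    using assms(1) by (simp add: card_Diff_subset_Int)
  then have "real (card (G - B)) / real (card G) = 1 - real (card (G \<inter> B)) / real (card G)"
    using G by (simp add: field_simps)
  then show ?thesis using assms(3) G by (simp add: divide_le_eq)
qed

lemma cell_count_times_cell_bound_le:
  fixes A C D N q :: real
  assumes "0 < A" "0 < C" "0 < D" "0 < N" "0 < q" "1 \<le> n"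
  shows "((q + A) / C + 1) ^ n * D * (real n * (A * N + 1) ^ (n - 1))
           \<le> (1 / N) * (real n * D * (q + 1 + A + C) ^ n * (A + 2 / N) ^ (n - 1)) / (C * q) ^ n * (q * N) ^ n"
proof -
  have "(q + A) / C + 1 \<le> (q + 1 + A + C) / C" using assms by (simp add: field_simps)
  moreover have "A * N + 1 \<le> N * (A + 2 / N)" using assms by (simp add: field_simps)
  ultimately have "((q + A) / C + 1) ^ n * D * (real n * (A * N + 1) ^ (n - 1))
      \<le> ((q + 1 + A + C) / C) ^ n * D * (real n * (N * (A + 2 / N)) ^ (n - 1))"
    using assms by (intro mult_mono power_mono mult_left_mono) simp_all
  also have "\<dots> = (1 / N) * (real n * D * (q + 1 + A + C) ^ n * (A + 2 / N) ^ (n - 1)) / (C * q) ^ n * (q * N) ^ n"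
  proof -
    obtain k where n: "n = Suc k" using assms(6) by (cases n) auto
    have "(R / C) ^ n * D * (m * (N * E) ^ (n - 1)) = (1 / N) * (m * D * R ^ n * E ^ (n - 1)) / (C * q) ^ n * (q * N) ^ n"
      for R E m :: real
      using assms unfolding n by (simp add: field_simps)
    then show ?thesis .
  qed
  finally show ?thesis .
qed

theorem proposition5p1:
  fixes \<Lambda> :: "(real^'n) set" and X :: "'x set" and d :: "'x \<Rightarrow> real^'n"
    and fRep :: "('x \<times> (real^'n)) set"
    and A C D \<epsilon> :: real and N q L :: nat and s :: "real^'n"
  assumes "infrastructure \<Lambda> X d fRep"
    and "cornered \<Lambda> X d fRep"
    and "assumption_A1 \<Lambda> X d fRep A"
    and "assumption_A2 \<Lambda> X d C D"
    and "N \<ge> 1" and "q \<ge> 1" and "L \<ge> 1"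
    and "0 < \<epsilon>" and "\<epsilon> \<le> 1 / (2 * real N * real L)"
    and "s \<in> Sgrid N L"
    and "Heps \<Lambda> X d fRep \<epsilon> \<inter> Ggrid N q s = {}"
  shows "real (card (Ggrid N q s - Hbound \<Lambda> X d fRep N)) / real (card (Ggrid N q s))
           \<ge> 1 - (1 / real N) *
               (real CARD('n) * D * (real q + 1 + A + C) ^ CARD('n) * (A + 2 / real N) ^ (CARD('n) - 1))
               / (C * real q) ^ CARD('n)"
proof (rule card_Diff_ratio_ge)
  note inf = assms(1) and corn = assms(2) and A1 = assms(3) and A2 = assms(4) and N = assms(5)
  have pos: "0 < A" "0 < C" "0 < D" "0 < real N" "0 < real q"
    using A1 A2 N assms(6) unfolding assumption_A1_def assumption_A2_def by simp_all
  show "finite (Ggrid N q s)" using card_Ggrid(1)[OF N] .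
  show "Ggrid N q s \<noteq> {}" using card_Ggrid(2)[OF N, of q s] pos by auto
  show "real (card (Ggrid N q s \<inter> Hbound \<Lambda> X d fRep N)) \<le> (1 / real N) *
          (real CARD('n) * D * (real q + 1 + A + C) ^ CARD('n) * (A + 2 / real N) ^ (CARD('n) - 1))
          / (C * real q) ^ CARD('n) * real (card (Ggrid N q s))"
    using card_Ggrid_Int_Hbound_le[OF inf corn A1 A2 N assms(8,11)]
      cell_count_times_cell_bound_le[OF pos, of "CARD('n)"] card_Ggrid(2)[OF N, of q s]
    by simp
qed

end
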